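(* Let $m_{11},m_{12},m_{13},l_1,l_2\in k$ with $(m_{11},m_{12},m_{13})\neq0$, $m_{12}l_1^2+m_{13}l_2^2=m_{11}$, $l_1=0$ and $l_2\neq0$, and let $M=\begin{pmatrix}m_{11}&m_{12}&m_{13}\\ l_1m_{11}&l_1m_{12}&l_1m_{13}\\ l_2m_{11}&l_2m_{12}&l_2m_{13}\end{pmatrix}$. Then: (1) if $m_{12}\neq0$ and $m_{13}\neq0$, then $\mathcal{A}_{\mathcal{O}_{-1}(k^3)}(M)\cong\mathcal{A}_{\mathcal{O}_{-1}(k^3)}(E_{11}+E_{12}+E_{13}+E_{31}+E_{32}+E_{33})$; (2) if $m_{12}=0$ and $m_{13}\neq0$, then $\mathcal{A}_{\mathcal{O}_{-1}(k^3)}(M)\cong\mathcal{A}_{\mathcal{O}_{-1}(k^3)}(E_{11}+E_{13}+E_{31}+E_{33})$; (3) if $m_{12}\neq0$ and $m_{13}=0$, then $\mathcal{A}_{\mathcal{O}_{-1}(k^3)}(M)\cong\mathcal{A}_{\mathcal{O}_{-1}(k^3)}(E_{12}+E_{32})$.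
   Context: $k$ is an algebraically closed field of characteristic zero. $E_{ij}$ denotes the $3\times3$ matrix unit with $1$ in position $(i,j)$. For $M=(m_{ij})\in M_3(k)$, $\mathcal{A}_{\mathcal{O}_{-1}(k^3)}(M)$ is the connected cochain DG algebra whose underlying graded algebra is generated by degree-one $x_1,x_2,x_3$ subject to $x_ix_j=-x_jx_i$ ($i<j$), with differential determined by $\partial(x_i)=\sum_j m_{ij}x_j^2$ and the Leibniz rule; $\cong$ means isomorphism of DG algebras. *)

theory Defs
  imports "HOL-Computational_Algebra.Polynomial"
begin

text \<open>Concrete model of the skew polynomial algebra O_{-1}(k^3) = k<x1,x2,x3>/(xi xj + xj xi, i<j),
  via its PBW basis of ordered monomials x1^a1 x2^a2 x3^a3 (indexed by exponent triples).\<close>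

type_synonym 'k skp = "nat \<times> nat \<times> nat \<Rightarrow> 'k"

definition skcarrier :: "'k::field skp set" where
  "skcarrier = {p. finite {m. p m \<noteq> 0}}"

text \<open>(x1^a1 x2^a2 x3^a3)(x1^b1 x2^b2 x3^b3) = (-1)^(b1(a2+a3)+b2 a3) x1^(a1+b1) x2^(a2+b2) x3^(a3+b3)\<close>
definition skmul :: "'k::field skp \<Rightarrow> 'k skp \<Rightarrow> 'k skp" where
  "skmul p q = (\<lambda>(m1, m2, m3).
     \<Sum>(a1, a2, a3) \<in> {0..m1} \<times> {0..m2} \<times> {0..m3}.
       (-1) ^ ((m1 - a1) * (a2 + a3) + (m2 - a2) * a3) * p (a1, a2, a3) * q (m1 - a1, m2 - a2, m3 - a3))"

definition skadd :: "'k::field skp \<Rightarrow> 'k skp \<Rightarrow> 'k skp" where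
  "skadd p q = (\<lambda>m. p m + q m)"

definition sksmult :: "'k::field \<Rightarrow> 'k skp \<Rightarrow> 'k skp" where
  "sksmult c p = (\<lambda>m. c * p m)"

definition skone :: "'k::field skp" where
  "skone = (\<lambda>m. if m = (0, 0, 0) then 1 else 0)"

definition skgen :: "nat \<Rightarrow> 'k::field skp" where
  "skgen i = (\<lambda>m. if m = (if i = 1 then (1, 0, 0) else if i = 2 then (0, 1, 0) else (0, 0, 1))
                  then 1 else 0)"

definition mdeg :: "nat \<times> nat \<times> nat \<Rightarrow> nat" where
  "mdeg m = (case m of (a, b, c) \<Rightarrow> a + b + c)"

definition homog :: "nat \<Rightarrow> 'k::field skp \<Rightarrow> bool" where
  "homog n p \<longleftrightarrow> p \<in> skcarrier \<and> (\<forall>m. p m \<noteq> 0 \<longrightarrow> mdeg m = n)"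

definition mat3 :: "'k \<Rightarrow> 'k \<Rightarrow> 'k \<Rightarrow> 'k \<Rightarrow> 'k \<Rightarrow> 'k \<Rightarrow> 'k \<Rightarrow> 'k \<Rightarrow> 'k \<Rightarrow> nat \<Rightarrow> nat \<Rightarrow> 'k::zero" where
  "mat3 a11 a12 a13 a21 a22 a23 a31 a32 a33 = (\<lambda>i j.
     if i = 1 then (if j = 1 then a11 else if j = 2 then a12 else if j = 3 then a13 else 0)
     else if i = 2 then (if j = 1 then a21 else if j = 2 then a22 else if j = 3 then a23 else 0)
     else if i = 3 then (if j = 1 then a31 else if j = 2 then a32 else if j = 3 then a33 else 0)
     else 0)"

definition is_diff :: "(nat \<Rightarrow> nat \<Rightarrow> 'k::field) \<Rightarrow> ('k skp \<Rightarrow> 'k skp) \<Rightarrow> bool" where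
  "is_diff M d \<longleftrightarrow>
     (\<forall>p. p \<notin> skcarrier \<longrightarrow> d p = (\<lambda>_. 0)) \<and>
     (\<forall>p \<in> skcarrier. d p \<in> skcarrier) \<and>
     (\<forall>p \<in> skcarrier. \<forall>q \<in> skcarrier. d (skadd p q) = skadd (d p) (d q)) \<and>
     (\<forall>c. \<forall>p \<in> skcarrier. d (sksmult c p) = sksmult c (d p)) \<and>
     (\<forall>n p. homog n p \<longrightarrow> homog (Suc n) (d p)) \<and>
     (\<forall>n p q. homog n p \<longrightarrow> q \<in> skcarrier \<longrightarrow>
        d (skmul p q) = skadd (skmul (d p) q) (sksmult ((-1) ^ n) (skmul p (d q)))) \<and>
     (\<forall>i \<in> {1, 2, 3}. d (skgen i) =
        (\<lambda>m. \<Sum>j \<in> {1, 2, 3}. M i j * skmul (skgen j) (skgen j) m))"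

definition dga_diff :: "(nat \<Rightarrow> nat \<Rightarrow> 'k::field) \<Rightarrow> 'k skp \<Rightarrow> 'k skp" where
  "dga_diff M = (THE d. is_diff M d)"

definition dga_iso :: "(nat \<Rightarrow> nat \<Rightarrow> 'k::field) \<Rightarrow> (nat \<Rightarrow> nat \<Rightarrow> 'k) \<Rightarrow> bool" where
  "dga_iso M N \<longleftrightarrow> (\<exists>f. bij_betw f skcarrier skcarrier \<and>
     (\<forall>p \<in> skcarrier. \<forall>q \<in> skcarrier. f (skadd p q) = skadd (f p) (f q)) \<and>
     (\<forall>c. \<forall>p \<in> skcarrier. f (sksmult c p) = sksmult c (f p)) \<and>
     (\<forall>p \<in> skcarrier. \<forall>q \<in> skcarrier. f (skmul p q) = skmul (f p) (f q)) \<and>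
     f skone = skone \<and>
     (\<forall>n p. homog n p \<longrightarrow> homog n (f p)) \<and>
     (\<forall>p \<in> skcarrier. f (dga_diff M p) = dga_diff N (f p)))"

end

theory Submission
  imports Defs "HOL-Library.Product_Plus" "HOL-Library.Product_Order"
begin

text \<open>
  A diagonal change of variables x_i \<mapsto> c_i x_i (all c_i \<noteq> 0) is an automorphism of the
  graded algebra O_{-1}(k^3), and it carries the differential with matrix M to the one with
  matrix N as soon as M_ij c_j^2 = c_i N_ij. For the rank-one matrices of the theorem such
  c exist (case (1) needs a square root, hence the algebraically closed field).
  Since the differential of A(M) is defined by a description, the real work is to show that
  the description is proper: the differential is written down explicitly on the PBW monomials,
  checked to satisfy the defining properties, and shown to be unique because it is linear and
  every monomial is a product of generators.
\<close>

section \<open>Monomials\<close>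

definition skmon :: "nat \<times> nat \<times> nat \<Rightarrow> 'k::field skp" where
  "skmon a = (\<lambda>m. if m = a then 1 else 0)"

fun skmul_sign :: "nat \<times> nat \<times> nat \<Rightarrow> nat \<times> nat \<times> nat \<Rightarrow> 'k::field" where
  "skmul_sign (a1, a2, a3) (b1, b2, b3) = (-1) ^ (b1 * (a2 + a3) + b2 * a3)"

lemma skmul_eq_sum:
  "skmul p q m = (\<Sum>a\<in>{0..m}. skmul_sign a (m - a) * p a * q (m - a))"
  by (cases m) (auto simp: skmul_def atLeastAtMost_prod_eq zero_prod_def intro!: sum.cong)

lemma zero_le_exponent [simp]: "(0 :: nat \<times> nat \<times> nat) \<le> a"
  by (cases a) (simp add: zero_prod_def)

lemma finite_exponent_interval [simp]: "finite {0..m :: nat \<times> nat \<times> nat}"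
  by (cases m) (simp add: atLeastAtMost_prod_eq zero_prod_def)

lemma exponent_diff_le [simp]: "m - b \<le> (m :: nat \<times> nat \<times> nat)"
  by (cases m; cases b) simp

lemma skmul_skmon_left:
  "skmul (skmon a) q m = (if a \<le> m then skmul_sign a (m - a) * q (m - a) else 0)"
proof -
  have "skmul (skmon a) q m = (\<Sum>b\<in>{0..m}. if b = a then skmul_sign a (m - a) * q (m - a) else 0)"
    unfolding skmul_eq_sum skmon_def by (intro sum.cong) auto
  then show ?thesis
    by (simp add: sum.delta)
qed

lemma skmul_skmon_right:
  "skmul p (skmon b) m = (if b \<le> m then skmul_sign (m - b) b * p (m - b) else 0)"
proof -
  have "skmul p (skmon b) m =
      (\<Sum>a\<in>{0..m}. if a = m - b \<and> b \<le> m then skmul_sign a b * p a else 0)"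
    unfolding skmul_eq_sum skmon_def
    by (intro sum.cong refl) (cases m; cases b; auto)
  then show ?thesis
    by (cases "b \<le> m") (simp_all add: sum.delta)
qed

lemma skmul_skmon_skmon:
  "skmul (skmon a) (skmon b) m = skmul_sign a b * (skmon (a + b) m :: 'k::field)"
  unfolding skmul_skmon_left by (cases a; cases b; cases m) (auto simp: skmon_def)

lemma skmul_sum_left:
  "finite S \<Longrightarrow> skmul (\<lambda>m. \<Sum>x\<in>S. G x m) q m = (\<Sum>x\<in>S. skmul (G x) q m)"
  unfolding skmul_eq_sum by (simp add: sum_distrib_left sum_distrib_right sum.swap[of _ S])

lemma skmul_sum_right:
  "finite S \<Longrightarrow> skmul p (\<lambda>m. \<Sum>x\<in>S. G x m) m = (\<Sum>x\<in>S. skmul p (G x) m)"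
  unfolding skmul_eq_sum by (simp add: sum_distrib_left sum.swap[of _ S])

lemma skmul_scale_left: "skmul (\<lambda>m. c * p m) q m = c * skmul p q m"
  unfolding skmul_eq_sum by (simp add: sum_distrib_left ac_simps)

lemma skmul_scale_right: "skmul p (\<lambda>m. c * q m) m = c * skmul p q m"
  unfolding skmul_eq_sum by (simp add: sum_distrib_left ac_simps)

lemma skone_eq_skmon: "skone = skmon 0"
  by (simp add: skone_def skmon_def zero_prod_def)

lemma skmul_skone_left [simp]: "skmul skone p = p"
  by (rule ext) (auto simp: skone_eq_skmon skmul_skmon_left zero_prod_def)

lemma skmul_skone_right [simp]: "skmul p skone = p"
  by (rule ext) (auto simp: skone_eq_skmon skmul_skmon_right zero_prod_def)

lemma skcarrier_iff: "p \<in> skcarrier \<longleftrightarrow> finite {m. p m \<noteq> 0}"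
  by (simp add: skcarrier_def)

lemma skcarrier_zero: "(\<lambda>m. 0) \<in> skcarrier"
  by (simp add: skcarrier_iff)

lemma skcarrier_skmon: "skmon a \<in> skcarrier"
  unfolding skcarrier_iff skmon_def by (rule finite_subset[of _ "{a}"]) auto

lemma skcarrier_scale: "p \<in> skcarrier \<Longrightarrow> (\<lambda>m. c * p m) \<in> skcarrier"
  unfolding skcarrier_iff by (rule finite_subset[rotated]) auto

lemma skcarrier_add: "p \<in> skcarrier \<Longrightarrow> q \<in> skcarrier \<Longrightarrow> (\<lambda>m. p m + q m) \<in> skcarrier"
  unfolding skcarrier_iff by (rule finite_subset[of _ "{m. p m \<noteq> 0} \<union> {m. q m \<noteq> 0}"]) auto

lemma skcarrier_sum:
  assumes "finite S" and "\<And>x. x \<in> S \<Longrightarrow> G x \<in> skcarrier"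
  shows "(\<lambda>m. \<Sum>x\<in>S. G x m) \<in> skcarrier"
proof -
  have "{m. (\<Sum>x\<in>S. G x m) \<noteq> 0} \<subseteq> (\<Union>x\<in>S. {m. G x m \<noteq> 0})"
    by (auto intro: sum.neutral)
  moreover have "finite (\<Union>x\<in>S. {m. G x m \<noteq> 0})"
    using assms by (auto simp: skcarrier_iff)
  ultimately show ?thesis
    by (auto simp: skcarrier_iff intro: finite_subset)
qed

lemma skmon_expansion:
  assumes "p \<in> skcarrier"
  shows "(\<lambda>m. \<Sum>a | p a \<noteq> 0. p a * skmon a m) = p"
proof
  fix m
  have "(\<Sum>a | p a \<noteq> 0. p a * skmon a m) = (\<Sum>a | p a \<noteq> 0. if a = m then p a else 0)"
    by (intro sum.cong) (auto simp: skmon_def)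
  also have "\<dots> = p m"
    using assms by (simp add: sum.delta' skcarrier_iff)
  finally show "(\<Sum>a | p a \<noteq> 0. p a * skmon a m) = p m" .
qed

definition sklinear :: "('k::field skp \<Rightarrow> 'k skp) \<Rightarrow> bool" where
  "sklinear L \<longleftrightarrow>
     (\<forall>p \<in> skcarrier. \<forall>q \<in> skcarrier. L (skadd p q) = skadd (L p) (L q)) \<and>
     (\<forall>c. \<forall>p \<in> skcarrier. L (sksmult c p) = sksmult c (L p))"

lemma sklinear_linear_combination:
  assumes L: "sklinear L" and "finite S" and "\<And>x. x \<in> S \<Longrightarrow> G x \<in> skcarrier"
  shows "L (\<lambda>m. \<Sum>x\<in>S. c x * G x m) = (\<lambda>m. \<Sum>x\<in>S. c x * L (G x) m)"
  using assms(2,3)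
proof (induction S rule: finite_induct)
  case empty
  have "L (\<lambda>m. 0) = L (sksmult 0 (\<lambda>m. 0))"
    by (simp add: sksmult_def)
  also have "\<dots> = sksmult 0 (L (\<lambda>m. 0))"
    using L skcarrier_zero unfolding sklinear_def by blast
  finally show ?case
    by (simp add: sksmult_def)
next
  case (insert x F)
  have "(\<lambda>m. \<Sum>y\<in>F. c y * G y m) \<in> skcarrier"
    using insert by (intro skcarrier_sum skcarrier_scale) auto
  moreover have "(\<lambda>m. \<Sum>y\<in>insert x F. c y * G y m) = skadd (sksmult (c x) (G x)) (\<lambda>m. \<Sum>y\<in>F. c y * G y m)"
    using insert by (simp add: skadd_def sksmult_def)
  ultimately show ?case
    using L insert skcarrier_scale[of "G x" "c x"]
    by (simp add: sklinear_def skadd_def sksmult_def)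
qed

lemma sklinear_eqI:
  assumes "sklinear L" and "sklinear L'" and "\<And>a. L (skmon a) = L' (skmon a)"
    and "p \<in> skcarrier"
  shows "L p = L' p"
proof -
  have fin: "finite {a. p a \<noteq> 0}"
    using assms(4) by (simp add: skcarrier_iff)
  have "L p = (\<lambda>m. \<Sum>a | p a \<noteq> 0. p a * L (skmon a) m)"
    using sklinear_linear_combination[OF assms(1) fin, where G = skmon and c = p]
    by (simp add: skcarrier_skmon skmon_expansion[OF assms(4)])
  also have "\<dots> = L' p"
    using sklinear_linear_combination[OF assms(2) fin, where G = skmon and c = p]
    by (simp add: skcarrier_skmon skmon_expansion[OF assms(4)] assms(3))
  finally show ?thesis .
qed

section \<open>The differential of A(M)\<close>

definition unit_exp :: "nat \<Rightarrow> nat \<times> nat \<times> nat" where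
  "unit_exp i = (if i = 1 then (1, 0, 0) else if i = 2 then (0, 1, 0) else (0, 0, 1))"

lemma skgen_eq_skmon: "skgen i = skmon (unit_exp i)"
  by (simp add: skgen_def skmon_def unit_exp_def)

fun triple_nth :: "nat \<Rightarrow> 'a \<times> 'a \<times> 'a \<Rightarrow> 'a" where
  "triple_nth i (a1, a2, a3) = (if i = 1 then a1 else if i = 2 then a2 else a3)"

text \<open>
  Each x_j^2 is central, so d(x_i) is central and d(x_i^2) = 0. Hence
  d(x^a) = \<Sum>_i \<epsilon>_i(a) x^(a - e_i) d(x_i), where \<epsilon>_i(a) = diff_coeff i a vanishes unless a_i is odd
  and is otherwise the Koszul sign (-1)^(a_1 + ... + a_(i-1)); finally x^b x_j^2 = x^(b + 2 e_j).
\<close>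

fun diff_coeff :: "nat \<Rightarrow> nat \<times> nat \<times> nat \<Rightarrow> 'k::field" where
  "diff_coeff i (a1, a2, a3) =
     (if even (triple_nth i (a1, a2, a3)) then 0
      else if i = 1 then 1 else if i = 2 then (-1) ^ a1 else (-1) ^ (a1 + a2))"

definition diff_exp :: "nat \<Rightarrow> nat \<Rightarrow> nat \<times> nat \<times> nat \<Rightarrow> nat \<times> nat \<times> nat" where
  "diff_exp i j a = a - unit_exp i + (unit_exp j + unit_exp j)"

definition diff_mon :: "(nat \<Rightarrow> nat \<Rightarrow> 'k::field) \<Rightarrow> nat \<times> nat \<times> nat \<Rightarrow> 'k skp" where
  "diff_mon M a = (\<lambda>m. \<Sum>i\<in>{1, 2, 3}. \<Sum>j\<in>{1, 2, 3}. M i j * diff_coeff i a * skmon (diff_exp i j a) m)"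

definition skdiff :: "(nat \<Rightarrow> nat \<Rightarrow> 'k::field) \<Rightarrow> 'k skp \<Rightarrow> 'k skp" where
  "skdiff M p = (if p \<in> skcarrier then (\<lambda>m. \<Sum>a | p a \<noteq> 0. p a * diff_mon M a m) else (\<lambda>_. 0))"

lemma diff_coeff_even: "even (triple_nth i a) \<Longrightarrow> diff_coeff i a = 0"
  by (cases a) simp

lemma diff_coeff_add:
  assumes "i \<in> {1, 2, 3}"
  shows "skmul_sign a b * diff_coeff i (a + b) =
    diff_coeff i a * skmul_sign (a - unit_exp i) b + (-1) ^ mdeg a * diff_coeff i b * (skmul_sign a (b - unit_exp i) :: 'k::field)"
  using assms by (cases a; cases b) (auto simp: unit_exp_def mdeg_def minus_one_power_iff)

lemma skmul_sign_add_square_left: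
  "j \<in> {1, 2, 3} \<Longrightarrow> skmul_sign (a + (unit_exp j + unit_exp j)) b = (skmul_sign a b :: 'k::field)"
  by (cases a; cases b) (auto simp: unit_exp_def minus_one_power_iff)

lemma skmul_sign_add_square_right:
  "j \<in> {1, 2, 3} \<Longrightarrow> skmul_sign a (b + (unit_exp j + unit_exp j)) = (skmul_sign a b :: 'k::field)"
  by (cases a; cases b) (auto simp: unit_exp_def minus_one_power_iff algebra_simps)

lemma diff_exp_add_left: "odd (triple_nth i a) \<Longrightarrow> diff_exp i j a + b = diff_exp i j (a + b)"
  by (cases a; cases b) (auto simp: diff_exp_def unit_exp_def elim!: oddE)

lemma diff_exp_add_right: "odd (triple_nth i b) \<Longrightarrow> a + diff_exp i j b = diff_exp i j (a + b)"
  by (cases a; cases b) (auto simp: diff_exp_def unit_exp_def elim!: oddE)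

lemma mdeg_diff_exp:
  "i \<in> {1, 2, 3} \<Longrightarrow> j \<in> {1, 2, 3} \<Longrightarrow> odd (triple_nth i a) \<Longrightarrow>
    mdeg (diff_exp i j a) = Suc (mdeg a)"
  by (cases a) (auto simp: diff_exp_def unit_exp_def mdeg_def elim!: oddE)

lemma diff_mon_term_Leibniz:
  assumes "i \<in> {1, 2, 3}" and "j \<in> {1, 2, 3}"
  shows "skmul_sign a b * diff_coeff i (a + b) * skmon (diff_exp i j (a + b)) m
    = diff_coeff i a * skmul_sign (diff_exp i j a) b * skmon (diff_exp i j a + b) m
      + (-1) ^ mdeg a * diff_coeff i b * skmul_sign a (diff_exp i j b) * (skmon (a + diff_exp i j b) m :: 'k::field)"
proof -
  have left: "diff_coeff i a * skmon (diff_exp i j a + b) m = diff_coeff i a * (skmon (diff_exp i j (a + b)) m :: 'k)"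
    by (cases "odd (triple_nth i a)") (simp_all add: diff_coeff_even diff_exp_add_left)
  have right: "diff_coeff i b * skmon (a + diff_exp i j b) m = diff_coeff i b * (skmon (diff_exp i j (a + b)) m :: 'k)"
    by (cases "odd (triple_nth i b)") (simp_all add: diff_coeff_even diff_exp_add_right)
  have s1: "skmul_sign (diff_exp i j a) b = (skmul_sign (a - unit_exp i) b :: 'k)"
    unfolding diff_exp_def using assms(2) by (rule skmul_sign_add_square_left)
  have s2: "skmul_sign a (diff_exp i j b) = (skmul_sign a (b - unit_exp i) :: 'k)"
    unfolding diff_exp_def using assms(2) by (rule skmul_sign_add_square_right)
  have "diff_coeff i a * skmul_sign (diff_exp i j a) b * skmon (diff_exp i j a + b) m
      + (-1) ^ mdeg a * diff_coeff i b * skmul_sign a (diff_exp i j b) * (skmon (a + diff_exp i j b) m :: 'k)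
    = skmul_sign (a - unit_exp i) b * (diff_coeff i a * skmon (diff_exp i j a + b) m)
      + (-1) ^ mdeg a * skmul_sign a (b - unit_exp i) * (diff_coeff i b * skmon (a + diff_exp i j b) m)"
    by (simp only: s1 s2 ac_simps)
  also have "\<dots> = (diff_coeff i a * skmul_sign (a - unit_exp i) b
      + (-1) ^ mdeg a * diff_coeff i b * skmul_sign a (b - unit_exp i)) * skmon (diff_exp i j (a + b)) m"
    by (simp only: left right) (simp add: algebra_simps)
  also have "\<dots> = skmul_sign a b * diff_coeff i (a + b) * skmon (diff_exp i j (a + b)) m"
    by (simp add: diff_coeff_add[OF assms(1)])
  finally show ?thesis ..
qed

lemma skmul_expand:
  assumes "finite A" and "finite B"
  shows "skmul (\<lambda>m. \<Sum>a\<in>A. f a * P a m) (\<lambda>m. \<Sum>b\<in>B. g b * Q b m) m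
    = (\<Sum>(a, b)\<in>A \<times> B. f a * g b * skmul (P a) (Q b) m)"
  by (simp add: skmul_sum_left[OF assms(1)] skmul_sum_right[OF assms(2)] skmul_scale_left
      skmul_scale_right sum.cartesian_product sum_distrib_left ac_simps)

lemma diff_mon_Leibniz:
  "skmul_sign a b * diff_mon M (a + b) m
    = skmul (diff_mon M a) (skmon b) m + (-1) ^ mdeg a * skmul (skmon a) (diff_mon M b) m"
proof -
  let ?I = "{1 :: nat, 2, 3}"
  have left: "skmul (diff_mon M a) (skmon b) m
    = (\<Sum>i\<in>?I. \<Sum>j\<in>?I. M i j * (diff_coeff i a * skmul_sign (diff_exp i j a) b * skmon (diff_exp i j a + b) m))"
    unfolding diff_mon_def
    by (simp only: skmul_sum_left[of ?I] finite.intros skmul_scale_left skmul_skmon_skmon mult.assoc)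
  have right: "skmul (skmon a) (diff_mon M b) m
    = (\<Sum>i\<in>?I. \<Sum>j\<in>?I. M i j * (diff_coeff i b * skmul_sign a (diff_exp i j b) * skmon (a + diff_exp i j b) m))"
    unfolding diff_mon_def
    by (simp only: skmul_sum_right[of ?I] finite.intros skmul_scale_right skmul_skmon_skmon mult.assoc)
  have "skmul (diff_mon M a) (skmon b) m + (-1) ^ mdeg a * skmul (skmon a) (diff_mon M b) m
    = (\<Sum>i\<in>?I. \<Sum>j\<in>?I. M i j * (diff_coeff i a * skmul_sign (diff_exp i j a) b * skmon (diff_exp i j a + b) m
      + (-1) ^ mdeg a * diff_coeff i b * skmul_sign a (diff_exp i j b) * skmon (a + diff_exp i j b) m))"
    unfolding left right by (simp only: sum_distrib_left sum.distrib distrib_left ac_simps)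
  also have "\<dots> = (\<Sum>i\<in>?I. \<Sum>j\<in>?I. M i j * (skmul_sign a b * diff_coeff i (a + b) * skmon (diff_exp i j (a + b)) m))"
    by (intro sum.cong refl) (simp only: diff_mon_term_Leibniz)
  also have "\<dots> = skmul_sign a b * diff_mon M (a + b) m"
    unfolding diff_mon_def sum_distrib_left by (simp only: ac_simps)
  finally show ?thesis ..
qed

lemma skdiff_eq_sum:
  assumes "p \<in> skcarrier" and "finite S" and "{a. p a \<noteq> 0} \<subseteq> S"
  shows "skdiff M p m = (\<Sum>a\<in>S. p a * diff_mon M a m)"
  using assms unfolding skdiff_def by (auto intro: sum.mono_neutral_left)

lemma sklinear_skdiff:
  fixes M :: "nat \<Rightarrow> nat \<Rightarrow> 'k::field"
  shows "sklinear (skdiff M)"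
  unfolding sklinear_def
proof (intro conjI allI ballI ext)
  fix p q :: "'k skp" and m assume p: "p \<in> skcarrier" and q: "q \<in> skcarrier"
  let ?S = "{a. p a \<noteq> 0} \<union> {a. q a \<noteq> 0}"
  have fin: "finite ?S"
    using p q by (simp add: skcarrier_iff)
  have "skadd p q \<in> skcarrier"
    using skcarrier_add[OF p q] by (simp add: skadd_def)
  then have "skdiff M (skadd p q) m = (\<Sum>a\<in>?S. skadd p q a * diff_mon M a m)"
    using fin by (rule skdiff_eq_sum) (auto simp: skadd_def)
  also have "\<dots> = skdiff M p m + skdiff M q m"
    using skdiff_eq_sum[OF p fin] skdiff_eq_sum[OF q fin]
    by (simp add: skadd_def sum.distrib distrib_right)
  finally show "skdiff M (skadd p q) m = skadd (skdiff M p) (skdiff M q) m"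
    by (simp add: skadd_def)
next
  fix c and p :: "'k skp" and m assume p: "p \<in> skcarrier"
  have fin: "finite {a. p a \<noteq> 0}"
    using p by (simp add: skcarrier_iff)
  have "sksmult c p \<in> skcarrier"
    using skcarrier_scale[OF p] by (simp add: sksmult_def)
  then have "skdiff M (sksmult c p) m = (\<Sum>a | p a \<noteq> 0. sksmult c p a * diff_mon M a m)"
    using fin by (rule skdiff_eq_sum) (auto simp: sksmult_def)
  then show "skdiff M (sksmult c p) m = sksmult c (skdiff M p) m"
    using skdiff_eq_sum[OF p fin] by (simp add: sksmult_def sum_distrib_left mult.assoc)
qed

lemma skdiff_skmon: "skdiff M (skmon a) = diff_mon M a"
  using skdiff_eq_sum[OF skcarrier_skmon, of "{a}" a M] by (auto simp: skmon_def)

lemma skcarrier_diff_mon: "diff_mon M a \<in> skcarrier"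
  unfolding diff_mon_def by (intro skcarrier_sum skcarrier_scale skcarrier_skmon) auto

lemma skcarrier_skdiff: "skdiff M p \<in> skcarrier"
  unfolding skdiff_def
  by (auto simp: skcarrier_iff[of p] intro!: skcarrier_sum skcarrier_scale skcarrier_diff_mon skcarrier_zero)

lemma mdeg_of_diff_mon_nonzero:
  assumes "diff_mon M a m \<noteq> 0"
  shows "mdeg m = Suc (mdeg a)"
proof -
  obtain i where i: "i \<in> {1, 2, 3}"
    and "(\<Sum>j\<in>{1, 2, 3}. M i j * diff_coeff i a * skmon (diff_exp i j a) m) \<noteq> 0"
    using assms unfolding diff_mon_def by (rule sum.not_neutral_contains_not_neutral)
  then obtain j where j: "j \<in> {1, 2, 3}"
    and nz: "M i j * diff_coeff i a * skmon (diff_exp i j a) m \<noteq> 0"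
    by (meson sum.not_neutral_contains_not_neutral)
  from nz have "odd (triple_nth i a)"
    by (auto simp: diff_coeff_even)
  moreover from nz have "m = diff_exp i j a"
    by (simp add: skmon_def split: if_splits)
  ultimately show ?thesis
    using mdeg_diff_exp[OF i j] by simp
qed

lemma homog_skdiff:
  assumes "homog n p"
  shows "homog (Suc n) (skdiff M p)"
  unfolding homog_def
proof (intro conjI allI impI skcarrier_skdiff)
  fix m assume nz: "skdiff M p m \<noteq> 0"
  have "p \<in> skcarrier"
    using assms by (simp add: homog_def)
  with nz have "(\<Sum>a | p a \<noteq> 0. p a * diff_mon M a m) \<noteq> 0"
    by (simp add: skdiff_def)
  then obtain a where a: "a \<in> {a. p a \<noteq> 0}" and "p a * diff_mon M a m \<noteq> 0"
    by (rule sum.not_neutral_contains_not_neutral)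
  then have "mdeg m = Suc (mdeg a)"
    by (intro mdeg_of_diff_mon_nonzero) simp
  moreover have "mdeg a = n"
    using a assms unfolding homog_def by blast
  ultimately show "mdeg m = Suc n"
    by simp
qed

lemma skdiff_skmul_eq_sum:
  assumes p: "p \<in> skcarrier" and q: "q \<in> skcarrier"
  shows "skdiff M (skmul p q) m = (\<Sum>(a, b)\<in>{a. p a \<noteq> 0} \<times> {b. q b \<noteq> 0}.
    p a * q b * (skmul_sign a b * diff_mon M (a + b) m))"
proof -
  define A where "A = {a. p a \<noteq> 0}"
  define B where "B = {b. q b \<noteq> 0}"
  have fin: "finite A" "finite B"
    using p q by (simp_all add: A_def B_def skcarrier_iff)
  have "skmul p q = (\<lambda>m. \<Sum>x\<in>A \<times> B. (p (fst x) * q (snd x) * skmul_sign (fst x) (snd x)) * skmon (fst x + snd x) m)"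
    using skmul_expand[OF fin, of p skmon q skmon] skmon_expansion[OF p] skmon_expansion[OF q]
    by (simp add: fun_eq_iff A_def B_def split_def skmul_skmon_skmon mult.assoc)
  then have "skdiff M (skmul p q)
      = (\<lambda>m. \<Sum>x\<in>A \<times> B. (p (fst x) * q (snd x) * skmul_sign (fst x) (snd x)) * skdiff M (skmon (fst x + snd x)) m)"
    using fin by (simp only:) (intro sklinear_linear_combination sklinear_skdiff skcarrier_skmon; simp)
  then show ?thesis
    by (simp add: skdiff_skmon split_def mult.assoc A_def B_def)
qed

lemma skdiff_Leibniz:
  assumes hp: "homog n p" and q: "q \<in> skcarrier"
  shows "skdiff M (skmul p q) = skadd (skmul (skdiff M p) q) (sksmult ((-1) ^ n) (skmul p (skdiff M q)))"
proof
  fix m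
  have p: "p \<in> skcarrier"
    using hp by (simp add: homog_def)
  define A where "A = {a. p a \<noteq> 0}"
  define B where "B = {b. q b \<noteq> 0}"
  have fin: "finite A" "finite B"
    using p q by (simp_all add: A_def B_def skcarrier_iff)
  have left: "skmul (skdiff M p) q m = (\<Sum>(a, b)\<in>A \<times> B. p a * q b * skmul (diff_mon M a) (skmon b) m)"
    using skmul_expand[OF fin, of p "diff_mon M" q skmon m] skmon_expansion[OF q] p
    by (simp add: skdiff_def A_def B_def)
  have right: "skmul p (skdiff M q) m = (\<Sum>(a, b)\<in>A \<times> B. p a * q b * skmul (skmon a) (diff_mon M b) m)"
    using skmul_expand[OF fin, of p skmon q "diff_mon M" m] skmon_expansion[OF p] q
    by (simp add: skdiff_def A_def B_def)
  have "skdiff M (skmul p q) m = (\<Sum>(a, b)\<in>A \<times> B. p a * q b * (skmul_sign a b * diff_mon M (a + b) m))"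
    using skdiff_skmul_eq_sum[OF p q] by (simp add: A_def B_def)
  also have "\<dots> = (\<Sum>(a, b)\<in>A \<times> B. p a * q b *
      (skmul (diff_mon M a) (skmon b) m + (-1) ^ n * skmul (skmon a) (diff_mon M b) m))"
  proof (intro sum.cong refl, clarify)
    fix a b assume "a \<in> A"
    then have "mdeg a = n"
      using hp unfolding A_def homog_def by blast
    then show "p a * q b * (skmul_sign a b * diff_mon M (a + b) m)
      = p a * q b * (skmul (diff_mon M a) (skmon b) m + (-1) ^ n * skmul (skmon a) (diff_mon M b) m)"
      by (simp only: diff_mon_Leibniz)
  qed
  also have "\<dots> = skmul (skdiff M p) q m + (-1) ^ n * skmul p (skdiff M q) m"
    unfolding left right by (simp add: case_prod_beta sum.distrib sum_distrib_left algebra_simps)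
  finally show "skdiff M (skmul p q) m = skadd (skmul (skdiff M p) q) (sksmult ((-1) ^ n) (skmul p (skdiff M q))) m"
    by (simp add: skadd_def sksmult_def)
qed

lemma skdiff_skgen:
  assumes "i \<in> {1, 2, 3}"
  shows "skdiff M (skgen i) = (\<lambda>m. \<Sum>j\<in>{1, 2, 3}. M i j * skmul (skgen j) (skgen j) m)"
proof
  fix m
  from assms show "skdiff M (skgen i) m = (\<Sum>j\<in>{1, 2, 3}. M i j * skmul (skgen j) (skgen j) m)"
    unfolding skgen_eq_skmon skdiff_skmon skmul_skmon_skmon
    by (auto simp: diff_mon_def diff_exp_def unit_exp_def)
qed

lemma is_diff_skdiff: "is_diff M (skdiff M)"
  using sklinear_skdiff[of M] unfolding is_diff_def sklinear_def
  by (intro conjI allI ballI impI skcarrier_skdiff homog_skdiff skdiff_Leibniz skdiff_skgen)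
    (simp_all add: skdiff_def)

lemma is_diff_sklinear: "is_diff M d \<Longrightarrow> sklinear d"
  unfolding is_diff_def sklinear_def by blast

lemma is_diff_outside: "is_diff M d \<Longrightarrow> p \<notin> skcarrier \<Longrightarrow> d p = (\<lambda>_. 0)"
  unfolding is_diff_def by blast

lemma is_diff_Leibniz:
  "is_diff M d \<Longrightarrow> homog n p \<Longrightarrow> q \<in> skcarrier \<Longrightarrow>
    d (skmul p q) = skadd (skmul (d p) q) (sksmult ((-1) ^ n) (skmul p (d q)))"
  unfolding is_diff_def by blast

lemma is_diff_skgen:
  "is_diff M d \<Longrightarrow> i \<in> {1, 2, 3} \<Longrightarrow>
    d (skgen i) = (\<lambda>m. \<Sum>j\<in>{1, 2, 3}. M i j * skmul (skgen j) (skgen j) m)"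
  unfolding is_diff_def by blast

lemma mdeg_unit_exp: "mdeg (unit_exp i) = 1"
  by (simp add: unit_exp_def mdeg_def)

lemma homog_skmon: "homog (mdeg a) (skmon a)"
  using skcarrier_skmon[of a] unfolding homog_def skmon_def by simp

lemma is_diff_skone:
  assumes "is_diff M d"
  shows "d skone = (\<lambda>m. 0)"
proof
  fix m
  have "homog 0 skone"
    using homog_skmon[of 0] by (simp add: skone_eq_skmon mdeg_def zero_prod_def)
  from fun_cong[OF is_diff_Leibniz[OF assms this skcarrier_skmon[of 0]], of m]
  have "d skone m = d skone m + d skone m"
    by (simp only: skone_eq_skmon[symmetric] skmul_skone_left skmul_skone_right skadd_def sksmult_def power_0 mult_1_left)
  then show "d skone m = 0"
    by (simp only: add_cancel_right_right)
qed

lemma skmon_eq_skgen_mul: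
  assumes "mdeg a = Suc n"
  obtains i b where "i \<in> {1, 2, 3}" and "mdeg b = n" and "skmon a = (skmul (skgen i) (skmon b) :: 'k::field skp)"
proof -
  obtain a1 a2 a3 where a: "a = (a1, a2, a3)"
    by (cases a)
  have shift: "skmon a = (skmul (skgen i) (skmon b) :: 'k skp)"
    if "a = unit_exp i + b" and "skmul_sign (unit_exp i) b = (1 :: 'k)" for i b
    using that by (simp add: fun_eq_iff skgen_eq_skmon skmul_skmon_skmon)
  consider "a1 > 0" | "a1 = 0" "a2 > 0" | "a1 = 0" "a2 = 0" "a3 > 0"
    using assms a by (auto simp: mdeg_def)
  then show ?thesis
  proof cases
    case 1
    with assms a shift[of 1 "(a1 - 1, a2, a3)"] show ?thesis
      by (intro that[of 1 "(a1 - 1, a2, a3)"]) (auto simp: unit_exp_def mdeg_def)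
  next
    case 2
    with assms a shift[of 2 "(0, a2 - 1, a3)"] show ?thesis
      by (intro that[of 2 "(0, a2 - 1, a3)"]) (auto simp: unit_exp_def mdeg_def)
  next
    case 3
    with assms a shift[of 3 "(0, 0, a3 - 1)"] show ?thesis
      by (intro that[of 3 "(0, 0, a3 - 1)"]) (auto simp: unit_exp_def mdeg_def)
  qed
qed

lemma is_diff_skmon_unique:
  fixes M :: "nat \<Rightarrow> nat \<Rightarrow> 'k::field"
  assumes d1: "is_diff M d1" and d2: "is_diff M d2"
  shows "d1 (skmon a) = d2 (skmon a)"
proof (induction "mdeg a" arbitrary: a)
  case 0
  then have "skmon a = (skone :: 'k skp)"
    by (cases a) (simp add: mdeg_def skone_eq_skmon zero_prod_def)
  then show ?case
    using is_diff_skone[OF d1] is_diff_skone[OF d2] by simp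
next
  case (Suc n)
  then obtain i b where i: "i \<in> {1, 2, 3}" and b: "mdeg b = n"
    and a: "skmon a = (skmul (skgen i) (skmon b) :: 'k skp)"
    by (metis skmon_eq_skgen_mul)
  have "homog 1 (skgen i :: 'k skp)"
    using homog_skmon[of "unit_exp i"] by (simp add: skgen_eq_skmon mdeg_unit_exp)
  then have "d (skmon a) = skadd (skmul (d (skgen i)) (skmon b)) (sksmult (-1) (skmul (skgen i) (d (skmon b))))"
    if "is_diff M d" for d
    using is_diff_Leibniz[OF that _ skcarrier_skmon] unfolding a by simp
  moreover have "d1 (skgen i) = d2 (skgen i)"
    using is_diff_skgen[OF d1 i] is_diff_skgen[OF d2 i] by simp
  ultimately show ?case
    using d1 d2 Suc.hyps(1)[OF b[symmetric]] by simp
qed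

lemma is_diff_unique:
  assumes "is_diff M d1" and "is_diff M d2"
  shows "d1 = d2"
proof
  fix p
  show "d1 p = d2 p"
  proof (cases "p \<in> skcarrier")
    case True
    show ?thesis
      by (rule sklinear_eqI[OF is_diff_sklinear[OF assms(1)] is_diff_sklinear[OF assms(2)]
            is_diff_skmon_unique[OF assms] True])
  next
    case False
    show ?thesis
      by (simp add: is_diff_outside[OF assms(1) False] is_diff_outside[OF assms(2) False])
  qed
qed

lemma dga_diff_eq_skdiff: "dga_diff M = skdiff M"
  unfolding dga_diff_def using is_diff_skdiff is_diff_unique by blast

section \<open>Diagonal rescalings\<close>

fun exp_weight :: "'k::field \<times> 'k \<times> 'k \<Rightarrow> nat \<times> nat \<times> nat \<Rightarrow> 'k" where
  "exp_weight (c1, c2, c3) (m1, m2, m3) = c1 ^ m1 * c2 ^ m2 * c3 ^ m3"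

definition rescale :: "'k::field \<times> 'k \<times> 'k \<Rightarrow> 'k skp \<Rightarrow> 'k skp" where
  "rescale c p = (\<lambda>m. exp_weight c m * p m)"

lemma exp_weight_add: "exp_weight c (a + b) = exp_weight c a * exp_weight c b"
  by (cases c; cases a; cases b) (simp add: power_add ac_simps)

lemma exp_weight_nonzero:
  assumes "\<And>i. triple_nth i c \<noteq> 0"
  shows "exp_weight c m \<noteq> 0"
proof -
  obtain c1 c2 c3 where c: "c = (c1, c2, c3)"
    by (cases c)
  have "c1 \<noteq> 0" "c2 \<noteq> 0" "c3 \<noteq> 0"
    using assms[of 1] assms[of 2] assms[of 3] by (simp_all add: c)
  then show ?thesis
    by (cases m) (simp add: c)
qed

lemma exp_weight_diff_exp:
  assumes "i \<in> {1, 2, 3}" and "j \<in> {1, 2, 3}" and "odd (triple_nth i a)"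
  shows "exp_weight c (diff_exp i j a) * triple_nth i c = exp_weight c a * triple_nth j c ^ 2"
  using assms by (cases c; cases a) (auto simp: diff_exp_def unit_exp_def power2_eq_square ac_simps elim!: oddE)

lemma rescale_support: "(\<And>i. triple_nth i c \<noteq> 0) \<Longrightarrow> {m. rescale c p m \<noteq> 0} = {m. p m \<noteq> 0}"
  by (simp add: rescale_def exp_weight_nonzero)

lemma rescale_skmul: "rescale c (skmul p q) = skmul (rescale c p) (rescale c q)"
proof
  fix m
  show "rescale c (skmul p q) m = skmul (rescale c p) (rescale c q) m"
    unfolding rescale_def skmul_eq_sum sum_distrib_left
  proof (intro sum.cong refl)
    fix a assume "a \<in> {0..m}"
    then have "a + (m - a) = m"
      by (cases a; cases m) simp
    then have "exp_weight c m = exp_weight c a * exp_weight c (m - a)"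
      by (metis exp_weight_add)
    then show "exp_weight c m * (skmul_sign a (m - a) * p a * q (m - a))
      = skmul_sign a (m - a) * (exp_weight c a * p a) * (exp_weight c (m - a) * q (m - a))"
      by (simp only: ac_simps)
  qed
qed

lemma skcarrier_rescale: "(\<And>i. triple_nth i c \<noteq> 0) \<Longrightarrow> p \<in> skcarrier \<Longrightarrow> rescale c p \<in> skcarrier"
  by (simp add: skcarrier_iff rescale_support)

context
  fixes c :: "'k::field \<times> 'k \<times> 'k" and M N :: "nat \<Rightarrow> nat \<Rightarrow> 'k"
  assumes rel: "\<And>i j. i \<in> {1, 2, 3} \<Longrightarrow> j \<in> {1, 2, 3} \<Longrightarrow>
      M i j * triple_nth j c ^ 2 = triple_nth i c * N i j"
    and nz: "\<And>i. triple_nth i c \<noteq> 0"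
begin

lemma rescale_diff_mon: "exp_weight c m * diff_mon M a m = exp_weight c a * diff_mon N a m"
  unfolding diff_mon_def sum_distrib_left
proof (intro sum.cong refl)
  fix i j :: nat assume i: "i \<in> {1, 2, 3}" and j: "j \<in> {1, 2, 3}"
  show "exp_weight c m * (M i j * diff_coeff i a * skmon (diff_exp i j a) m)
    = exp_weight c a * (N i j * diff_coeff i a * skmon (diff_exp i j a) m)"
  proof (cases "odd (triple_nth i a) \<and> m = diff_exp i j a")
    case True
    then have odd: "odd (triple_nth i a)" and m: "m = diff_exp i j a"
      by simp_all
    have "exp_weight c m * M i j * triple_nth i c = M i j * (exp_weight c (diff_exp i j a) * triple_nth i c)"
      by (simp add: m ac_simps)
    also have "\<dots> = exp_weight c a * (M i j * triple_nth j c ^ 2)"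
      unfolding exp_weight_diff_exp[OF i j odd] by (simp only: ac_simps)
    also have "\<dots> = exp_weight c a * N i j * triple_nth i c"
      by (simp add: rel[OF i j] ac_simps)
    finally have "exp_weight c m * M i j = exp_weight c a * N i j"
      using nz[of i] by simp
    then show ?thesis
      by (simp add: m skmon_def mult.assoc[symmetric])
  next
    case False
    then show ?thesis
      by (auto simp: diff_coeff_even skmon_def)
  qed
qed

lemma rescale_skdiff:
  assumes p: "p \<in> skcarrier"
  shows "rescale c (skdiff M p) = skdiff N (rescale c p)"
proof
  fix m
  have fin: "finite {a. p a \<noteq> 0}"
    using p by (simp add: skcarrier_iff)
  have "rescale c (skdiff M p) m = (\<Sum>a | p a \<noteq> 0. p a * (exp_weight c m * diff_mon M a m))"
    by (simp only: rescale_def skdiff_eq_sum[OF p fin subset_refl] sum_distrib_left mult.left_commute)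
  also have "\<dots> = (\<Sum>a | p a \<noteq> 0. p a * (exp_weight c a * diff_mon N a m))"
    by (simp only: rescale_diff_mon)
  also have "\<dots> = (\<Sum>a | p a \<noteq> 0. rescale c p a * diff_mon N a m)"
    by (simp only: rescale_def ac_simps)
  also have "\<dots> = skdiff N (rescale c p) m"
    using skdiff_eq_sum[OF skcarrier_rescale[OF nz p] fin] rescale_support[OF nz] by simp
  finally show "rescale c (skdiff M p) m = skdiff N (rescale c p) m" .
qed

lemma dga_iso_by_rescaling: "dga_iso M N"
  unfolding dga_iso_def dga_diff_eq_skdiff
proof (intro exI[of _ "rescale c"] conjI allI ballI impI)
  show "bij_betw (rescale c) skcarrier skcarrier"
    by (rule bij_betw_byWitness[where f' = "\<lambda>p m. p m / exp_weight c m"])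
      (auto simp: rescale_def skcarrier_iff exp_weight_nonzero[OF nz])
  show "\<And>p q. rescale c (skadd p q) = skadd (rescale c p) (rescale c q)"
    by (simp add: rescale_def skadd_def distrib_left)
  show "\<And>a p. rescale c (sksmult a p) = sksmult a (rescale c p)"
    by (simp add: rescale_def sksmult_def ac_simps)
  show "\<And>p q. rescale c (skmul p q) = skmul (rescale c p) (rescale c q)"
    by (rule rescale_skmul)
  show "rescale c skone = skone"
    by (cases c) (simp add: rescale_def skone_def fun_eq_iff zero_prod_def)
  show "\<And>n p. homog n p \<Longrightarrow> homog n (rescale c p)"
    using skcarrier_rescale[OF nz] rescale_support[OF nz] unfolding homog_def by blast
  show "\<And>p. p \<in> skcarrier \<Longrightarrow> rescale c (skdiff M p) = skdiff N (rescale c p)"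
    by (rule rescale_skdiff)
qed

end

theorem lemma7p3:
  fixes m11 m12 m13 l1 l2 :: "'k::{alg_closed_field, field_char_0}"
  assumes "(m11, m12, m13) \<noteq> (0, 0, 0)"
    and "m12 * l1 ^ 2 + m13 * l2 ^ 2 = m11"
    and "l1 = 0"
    and "l2 \<noteq> 0"
  shows "(m12 \<noteq> 0 \<and> m13 \<noteq> 0 \<longrightarrow>
           dga_iso (mat3 m11 m12 m13 (l1 * m11) (l1 * m12) (l1 * m13) (l2 * m11) (l2 * m12) (l2 * m13))
                   (mat3 1 1 1 0 0 0 1 1 1)) \<and>
         (m12 = 0 \<and> m13 \<noteq> 0 \<longrightarrow>
           dga_iso (mat3 m11 m12 m13 (l1 * m11) (l1 * m12) (l1 * m13) (l2 * m11) (l2 * m12) (l2 * m13))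
                   (mat3 1 0 1 0 0 0 1 0 1)) \<and>
         (m12 \<noteq> 0 \<and> m13 = 0 \<longrightarrow>
           dga_iso (mat3 m11 m12 m13 (l1 * m11) (l1 * m12) (l1 * m13) (l2 * m11) (l2 * m12) (l2 * m13))
                   (mat3 0 1 0 0 0 0 0 1 0))"
proof -
  let ?M = "mat3 m11 m12 m13 (l1 * m11) (l1 * m12) (l1 * m13) (l2 * m11) (l2 * m12) (l2 * m13)"
  have m11: "m11 = m13 * l2 ^ 2"
    using assms(2,3) by simp
  have "dga_iso ?M (mat3 1 1 1 0 0 0 1 1 1)" if "m12 \<noteq> 0" "m13 \<noteq> 0"
  proof -
    obtain y :: 'k where "y ^ 2 = inverse (m11 * m12)"
      using nth_root_exists[of 2] by auto
    with that assms(3,4) show ?thesis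
      by (intro dga_iso_by_rescaling[where c = "(inverse m11, y, l2 / m11)"])
        (auto simp: m11 mat3_def field_simps power2_eq_square)
  qed
  moreover have "dga_iso ?M (mat3 1 0 1 0 0 0 1 0 1)" if "m12 = 0" "m13 \<noteq> 0"
    using that assms(3,4)
    by (intro dga_iso_by_rescaling[where c = "(inverse m11, 1, l2 / m11)"])
      (auto simp: m11 mat3_def field_simps power2_eq_square)
  moreover have "dga_iso ?M (mat3 0 1 0 0 0 0 0 1 0)" if "m12 \<noteq> 0" "m13 = 0"
    using that assms(3,4)
    by (intro dga_iso_by_rescaling[where c = "(m12, 1, l2 * m12)"])
      (auto simp: m11 mat3_def)
  ultimately show ?thesis
    by blast
qed

end
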